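(* Let $k\ge1$ and let $\phi=(\phi_1,\dots,\phi_k):\mathbb{D}^k\to\overline{\mathbb{D}}^k$ be an analytic map such that $C_\phi f=f\circ\phi$ maps $A^+(\mathbb{T}^k)$ into itself. Then $C_\phi:A^+(\mathbb{T}^k)\to A^+(\mathbb{T}^k)$ is an isometry if and only if there exist a square matrix $A=(a_{ij})_{1\le i,j\le k}$ with $a_{ij}\in\mathbb{N}_0$ and $\det A\ne0$, and complex numbers $\epsilon_1,\dots,\epsilon_k$ of modulus $1$, such that $$\phi_i(z)=\epsilon_iz_1^{a_{i1}}\cdots z_k^{a_{ik}},\qquad1\le i\le k,\ z=(z_1,\dots,z_k)\in\mathbb{D}^k.$$
   Context: $A^+(\mathbb{T}^k)$ is the algebra of functions $f(z)=\sum_{\alpha\in\mathbb{N}_0^k}a_\alpha z^\alpha$ on $\overline{\mathbb{D}}^k$ with $\|f\|_{A^+(\mathbb{T}^k)}=\sum|a_\alpha|<\infty$, a Banach algebra under pointwise multiplication. $\mathbb{N}_0=\{0,1,2,\dots\}$. *)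

theory Defs
  imports "HOL-Analysis.Analysis"
begin

text \<open>Multi-indices are functions 'k \<Rightarrow> nat on a finite index type 'k (so k = CARD('k) \<ge> 1).\<close>

definition monom :: "complex^'k \<Rightarrow> ('k::finite \<Rightarrow> nat) \<Rightarrow> complex" where
  "monom z \<alpha> = (\<Prod>i\<in>UNIV. (z$i) ^ (\<alpha> i))"

definition polydisc :: "(complex^'k::finite) set" where
  "polydisc = {z. \<forall>i. norm (z$i) < 1}"

definition cpolydisc :: "(complex^'k::finite) set" where
  "cpolydisc = {z. \<forall>i. norm (z$i) \<le> 1}"

text \<open>Elements of A^+(T^k) are represented by their (absolutely summable) coefficient families.\<close>
definition Aplus :: "(('k::finite \<Rightarrow> nat) \<Rightarrow> complex) set" where
  "Aplus = {c. (\<lambda>\<alpha>. norm (c \<alpha>)) summable_on UNIV}"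

definition Aplus_eval :: "(('k::finite \<Rightarrow> nat) \<Rightarrow> complex) \<Rightarrow> complex^'k \<Rightarrow> complex" where
  "Aplus_eval c z = (\<Sum>\<^sub>\<infinity>\<alpha>. c \<alpha> * monom z \<alpha>)"

definition Aplus_norm :: "(('k::finite \<Rightarrow> nat) \<Rightarrow> complex) \<Rightarrow> real" where
  "Aplus_norm c = (\<Sum>\<^sub>\<infinity>\<alpha>. norm (c \<alpha>))"

text \<open>d represents C_phi f = f o phi, where c represents f: they agree on the open polydisc.\<close>
definition is_comp :: "(complex^'k \<Rightarrow> complex^'k) \<Rightarrow> (('k::finite \<Rightarrow> nat) \<Rightarrow> complex)
     \<Rightarrow> (('k \<Rightarrow> nat) \<Rightarrow> complex) \<Rightarrow> bool" where
  "is_comp \<phi> c d \<longleftrightarrow> (\<forall>z\<in>polydisc. Aplus_eval d z = Aplus_eval c (\<phi> z))"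

definition holo_several :: "(complex^'k::finite \<Rightarrow> complex) \<Rightarrow> (complex^'k) set \<Rightarrow> bool" where
  "holo_several f S \<longleftrightarrow> (\<forall>z\<in>S. \<exists>D. (f has_derivative D) (at z) \<and>
       (\<forall>(a::complex) v. D (a *s v) = a * D v))"

end

theory Submission
  imports Defs "HOL-Library.Function_Algebras"
begin

text \<open>
  If \<open>\<phi>\<^sub>i(z) = \<epsilon>\<^sub>i z^a\<^sub>i\<close> for the rows \<open>a\<^sub>i\<close> of a nonsingular matrix \<open>A\<close>, then \<open>C\<^sub>\<phi>\<close> sends
  \<open>z^\<alpha>\<close> to a unimodular multiple of \<open>z^(A\<^sup>T \<alpha>)\<close>; as \<open>\<alpha> \<mapsto> A\<^sup>T \<alpha>\<close> is injective, \<open>C\<^sub>\<phi>\<close> merely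
  relabels and rotates coefficients.

  Conversely, let \<open>C\<^sub>\<phi>\<close> be isometric. The powers \<open>\<phi>^\<alpha> = C\<^sub>\<phi> z^\<alpha>\<close> have norm 1 and
  \<open>\<phi>^(\<alpha> + \<beta>)\<close> is the Cauchy product of \<open>\<phi>^\<alpha>\<close> and \<open>\<phi>^\<beta>\<close>; since the norm is multiplicative
  on them, no cancellation occurs and supports add. Testing the isometry on \<open>z^\<alpha> \<plusminus> z^\<beta>\<close>
  shows that \<open>\<phi>^\<alpha>\<close> and \<open>\<phi>^\<beta>\<close> have disjoint supports when \<open>\<alpha> \<noteq> \<beta>\<close>. So in any integer
  relation among support points of \<open>\<phi>\<^sub>1, \<dots>, \<phi>\<^sub>k\<close> the coefficients belonging to each \<open>\<phi>\<^sub>i\<close>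
  sum to zero. Consequently one support point of each \<open>\<phi>\<^sub>i\<close> yields a nonsingular exponent
  matrix, and Cramer's rule then shows that each \<open>\<phi>\<^sub>i\<close> has a single support point.

  Coefficients in \<open>A\<^sup>+\<close> are recovered from values on the open polydisc by restricting to
  curves \<open>z\<^sub>j = t^w\<^sub>j\<close> whose weights separate finitely many multi-indices.
\<close>

section \<open>Summation\<close>

lemma has_sum_group_fibres:
  fixes h :: "'a \<Rightarrow> 'b::{comm_monoid_add,uniform_space,uniform_topological_group_add}"
  assumes "\<And>m. finite {\<alpha>. e \<alpha> = m}" and "(h has_sum s) UNIV"
  shows "((\<lambda>m. sum h {\<alpha>. e \<alpha> = m}) has_sum s) UNIV"
proof (rule has_sum_Sigma'[where B="\<lambda>m. {\<alpha>. e \<alpha> = m}" and f="\<lambda>(m,\<alpha>). h \<alpha>"])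
  have "Sigma UNIV (\<lambda>m. {\<alpha>. e \<alpha> = m}) = (\<lambda>\<alpha>. (e \<alpha>, \<alpha>)) ` UNIV" by auto
  moreover have "inj (\<lambda>\<alpha>. (e \<alpha>, \<alpha>))" by (auto simp: inj_on_def)
  ultimately show "((\<lambda>(m,\<alpha>). h \<alpha>) has_sum s) (Sigma UNIV (\<lambda>m. {\<alpha>. e \<alpha> = m}))"
    using has_sum_reindex[of "\<lambda>\<alpha>. (e \<alpha>, \<alpha>)" UNIV "\<lambda>(m,\<alpha>). h \<alpha>" s] assms(2) by (simp add: o_def)
  show "((\<lambda>\<alpha>. (\<lambda>(m,\<alpha>). h \<alpha>) (m, \<alpha>)) has_sum sum h {\<alpha>. e \<alpha> = m}) {\<alpha>. e \<alpha> = m}" for m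
    using assms(1) by (simp add: has_sum_finiteI)
qed

lemma has_sum_reindex_inj_range:
  assumes "inj E" and "\<And>x. x \<notin> range E \<Longrightarrow> f x = 0"
  shows "(f has_sum s) UNIV \<longleftrightarrow> ((f \<circ> E) has_sum s) UNIV"
proof -
  have "(f has_sum s) UNIV \<longleftrightarrow> (f has_sum s) (range E)"
    by (rule has_sum_cong_neutral) (use assms(2) in auto)
  also have "\<dots> \<longleftrightarrow> ((f \<circ> E) has_sum s) UNIV" by (rule has_sum_reindex[OF assms(1)])
  finally show ?thesis .
qed

lemma has_sum_product:
  fixes f g :: "'a \<Rightarrow> 'b::{banach, real_normed_field}"
  assumes f: "(\<lambda>x. norm (f x)) summable_on UNIV" and g: "(\<lambda>y. norm (g y)) summable_on UNIV"
  shows "((\<lambda>(x,y). f x * g y) has_sum (infsum f UNIV * infsum g UNIV)) UNIV"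
proof -
  have Sg: "Sigma (UNIV::'a set) (\<lambda>_. UNIV::'a set) = UNIV" by auto
  have "(\<lambda>p. norm (f (fst p) * g (snd p))) summable_on Sigma UNIV (\<lambda>_. UNIV)"
  proof (subst Infinite_Sum.abs_summable_on_Sigma_iff, intro conjI ballI)
    fix x show "(\<lambda>y. norm (f (fst (x, y)) * g (snd (x, y)))) summable_on UNIV"
      using summable_on_cmult_right[OF g, of "norm (f x)"] by (simp add: norm_mult)
  next
    have "(\<lambda>x. norm (\<Sum>\<^sub>\<infinity>y. norm (f (fst (x, y)) * g (snd (x, y)))))
        = (\<lambda>x. norm (f x) * infsum (\<lambda>y. norm (g y)) UNIV)"
      by (simp add: norm_mult infsum_cmult_right' abs_mult infsum_nonneg)
    then show "(\<lambda>x. norm (\<Sum>\<^sub>\<infinity>y. norm (f (fst (x, y)) * g (snd (x, y))))) summable_on UNIV"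
      using summable_on_cmult_left[OF f, of "infsum (\<lambda>y. norm (g y)) UNIV"] by simp
  qed
  then have summ: "(\<lambda>(x,y). f x * g y) summable_on UNIV"
    using Infinite_Sum.abs_summable_summable by (simp add: Sg case_prod_unfold)
  have "infsum (\<lambda>(x,y). f x * g y) UNIV = infsum (\<lambda>x. infsum (\<lambda>y. f x * g y) UNIV) UNIV"
    using infsum_Sigma'_banach[of "\<lambda>x y. f x * g y" UNIV "\<lambda>_. UNIV"] summ by (simp add: Sg)
  also have "\<dots> = infsum f UNIV * infsum g UNIV"
    by (simp add: infsum_cmult_right' infsum_cmult_left')
  finally show ?thesis using summ by (metis has_sum_infsum)
qed

lemma sum_fun_apply: "(\<Sum>t\<in>T. f t) x = (\<Sum>t\<in>T. f t x)"
  by (induction T rule: infinite_finite_induct) simp_all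

lemma sum_UNIV_option: "sum f (UNIV :: 'a::finite option set) = f None + (\<Sum>r\<in>UNIV. f (Some r))"
  by (simp add: UNIV_option_conv sum.reindex)

lemma int_sum_pos_part_minus_neg_part:
  "int (\<Sum>t\<in>T. nat (w t) * f t) - int (\<Sum>t\<in>T. nat (- w t) * f t) = (\<Sum>t\<in>T. w t * int (f t))"
proof -
  have "int (\<Sum>t\<in>T. nat (w t) * f t) - int (\<Sum>t\<in>T. nat (- w t) * f t)
      = (\<Sum>t\<in>T. (int (nat (w t)) - int (nat (- w t))) * int (f t))"
    by (simp add: of_nat_sum sum_subtractf left_diff_distrib)
  also have "\<dots> = (\<Sum>t\<in>T. w t * int (f t))"
    by (rule sum.cong) (auto split: if_splits)
  finally show ?thesis .
qed

lemma powser_lowest_coeff_bound: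
  fixes C :: "nat \<Rightarrow> complex"
  assumes S: "((\<lambda>j. norm (C j)) has_sum S) UNIV"
    and sum0: "((\<lambda>j. C j * of_real t ^ j) has_sum 0) UNIV"
    and low: "\<And>j. j < m \<Longrightarrow> C j = 0" and t: "0 < t" "t < 1"
  shows "norm (C m) \<le> S * t"
proof -
  define g where "g j = (if m < j then C j * of_real t ^ j else 0)" for j
  have "((\<lambda>j. if j = m then C m * of_real t ^ m else 0) has_sum C m * of_real t ^ m) UNIV"
    by (rule has_sum_finite_neutralI[where B="{m}"]) auto
  note has_sum_add[OF sum0 has_sum_uminusI[OF this]]
  moreover have "(\<lambda>j. C j * of_real t ^ j + - (if j = m then C m * of_real t ^ m else 0)) = g"
    by (auto simp: g_def low fun_eq_iff not_less_iff_gr_or_eq)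
  ultimately have "(g has_sum - (C m * of_real t ^ m)) UNIV" by simp
  moreover have "((\<lambda>j. norm (C j) * t ^ Suc m) has_sum S * t ^ Suc m) UNIV"
    using has_sum_cmult_left[OF S, of "t ^ Suc m"] by (simp add: mult.commute)
  moreover have "norm (g j) \<le> norm (C j) * t ^ Suc m" for j
  proof (cases "m < j")
    case True
    then have "t ^ j \<le> t ^ Suc m" using t by (intro power_decreasing) auto
    then show ?thesis using True t by (simp add: g_def norm_mult norm_power mult_left_mono)
  qed (use t in \<open>simp add: g_def\<close>)
  ultimately have "norm (- (C m * of_real t ^ m)) \<le> S * t ^ Suc m"
    by (rule norm_infsum_le)
  then have "norm (C m) * t ^ m \<le> (S * t) * t ^ m"
    using t by (simp add: norm_mult norm_power mult_ac)
  then show ?thesis using t by simp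
qed

lemma powser_coeffs_eq_0:
  fixes C :: "nat \<Rightarrow> complex"
  assumes summable: "(\<lambda>m. norm (C m)) summable_on UNIV"
    and zero: "\<And>t::real. 0 < t \<Longrightarrow> t < 1 \<Longrightarrow> ((\<lambda>m. C m * of_real t ^ m) has_sum 0) UNIV"
  shows "C m = 0"
proof (induction m rule: less_induct)
  case (less m)
  define S where "S = infsum (\<lambda>m. norm (C m)) UNIV"
  have S: "((\<lambda>m. norm (C m)) has_sum S) UNIV" using summable S_def by (simp add: has_sum_infsum)
  have "S \<ge> 0" using S has_sum_nonneg by (metis norm_ge_zero)
  show ?case
  proof (rule ccontr)
    assume ne: "C m \<noteq> 0"
    define t where "t = min (1/2) (norm (C m) / (2 * (S + 1)))"
    have t: "0 < t" "t < 1" using ne \<open>S \<ge> 0\<close> by (auto simp: t_def)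
    have "S * t \<le> S * (norm (C m) / (2 * (S + 1)))"
      using \<open>S \<ge> 0\<close> by (intro mult_left_mono) (auto simp: t_def)
    also have "\<dots> < norm (C m)" using ne \<open>S \<ge> 0\<close> by (simp add: field_simps add_nonneg_pos)
    finally have "S * t < norm (C m)" .
    moreover have "norm (C m) \<le> S * t"
      by (rule powser_lowest_coeff_bound[OF S zero[OF t] _ t]) (rule less.IH)
    ultimately show False by simp
  qed
qed

lemma base_expansion_less:
  fixes a :: "nat \<Rightarrow> nat"
  assumes "\<forall>i<n. a i < B"
  shows "(\<Sum>i<n. a i * B ^ i) < B ^ n"
  using assms
proof (induction n)
  case (Suc n)
  have "(\<Sum>i<Suc n. a i * B ^ i) < B ^ n + a n * B ^ n" using Suc by simp
  also have "\<dots> = Suc (a n) * B ^ n" by simp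
  also have "\<dots> \<le> B * B ^ n" using Suc.prems by (intro mult_right_mono) auto
  finally show ?case by simp
qed simp

lemma base_expansion_inj:
  fixes a b :: "nat \<Rightarrow> nat"
  assumes "\<forall>i<n. a i < B" "\<forall>i<n. b i < B"
    and "(\<Sum>i<n. a i * B ^ i) = (\<Sum>i<n. b i * B ^ i)"
  shows "\<forall>i<n. a i = b i"
  using assms
proof (induction n)
  case (Suc n)
  let ?SA = "\<Sum>i<n. a i * B ^ i" and ?SB = "\<Sum>i<n. b i * B ^ i"
  have la: "?SA < B ^ n" using Suc.prems base_expansion_less[of n a B] by auto
  have lb: "?SB < B ^ n" using Suc.prems base_expansion_less[of n b B] by auto
  have eq: "?SA + a n * B ^ n = ?SB + b n * B ^ n" using Suc.prems(3) by simp
  have "B ^ n > 0" using la by (metis le0 le_less_trans)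
  have "(?SA + a n * B ^ n) mod B ^ n = ?SA" "(?SB + b n * B ^ n) mod B ^ n = ?SB"
    using la lb by simp_all
  then have "?SA = ?SB" using eq by simp
  then have "\<forall>i<n. a i = b i" by (intro Suc.IH) (use Suc.prems in auto)
  moreover have "a n = b n"
  proof -
    have "(?SA + a n * B ^ n) div B ^ n = a n" "(?SB + b n * B ^ n) div B ^ n = b n"
      using la lb \<open>B ^ n > 0\<close> by simp_all
    then show ?thesis using eq by simp
  qed
  ultimately show ?case by (auto simp: less_Suc_eq)
qed simp

section \<open>Integer matrices\<close>

lemma det_eq_0_iff_nontrivial_kernel:
  fixes A :: "'a::field^'n::finite^'n"
  shows "det A = 0 \<longleftrightarrow> (\<exists>x. x \<noteq> 0 \<and> A *v x = 0)"
proof -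
  have "det A \<noteq> 0 \<longleftrightarrow> inj ((*v) A)"
  proof
    assume "det A \<noteq> 0"
    then show "inj ((*v) A)" by (simp add: inj_matrix_vector_mult invertible_det_nz)
  next
    assume "inj ((*v) A)"
    then obtain B where "B ** A = mat 1" using matrix_left_invertible_injective by blast
    then have "det B * det A = 1" by (metis det_I det_mul)
    then show "det A \<noteq> 0" by auto
  qed
  then show ?thesis by (auto simp: vec.inj_iff_eq_0)
qed

definition of_int_mat :: "int^'n^'m \<Rightarrow> 'a::comm_ring_1^'n^'m" where
  "of_int_mat A = (\<chi> i j. of_int (A$i$j))"

definition of_int_vec :: "int^'n \<Rightarrow> 'a::comm_ring_1^'n" where
  "of_int_vec v = (\<chi> i. of_int (v$i))"

lemma det_of_int_mat: "det (of_int_mat A :: 'a::comm_ring_1^'n::finite^'n) = of_int (det A)"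
  unfolding det_def of_int_mat_def by (simp add: of_int_sum of_int_prod)

lemma of_int_vec_eq_iff [simp]:
  "(of_int_vec v :: 'a::{comm_ring_1,ring_char_0}^'n) = of_int_vec w \<longleftrightarrow> v = w"
  by (auto simp: of_int_vec_def vec_eq_iff)

lemma of_int_vec_eq_0_iff [simp]:
  "(of_int_vec v :: 'a::{comm_ring_1,ring_char_0}^'n) = 0 \<longleftrightarrow> v = 0"
  by (auto simp: of_int_vec_def vec_eq_iff)

lemma of_int_vec_smult: "of_int_vec (c *s v) = of_int c *s of_int_vec v"
  by (simp add: of_int_vec_def vec_eq_iff)

lemma of_int_vec_sum: "of_int_vec (sum f S) = (\<Sum>i\<in>S. of_int_vec (f i))"
  by (simp add: of_int_vec_def vec_eq_iff sum_component of_int_sum)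

lemma of_int_mat_vector_mult:
  "of_int_mat A *v of_int_vec v = of_int_vec (A *v v :: int^'m)"
  by (simp add: vec_eq_iff matrix_vector_mult_def of_int_mat_def of_int_vec_def of_int_sum)

lemma exists_int_multiple_of_rat_vec:
  fixes x :: "rat^'n::finite"
  obtains d v where "d \<noteq> 0" "of_int_vec v = of_int d *s x"
proof
  define p where "p i = fst (quotient_of (x$i))" for i
  define q where "q i = snd (quotient_of (x$i))" for i
  have q: "q i > 0" for i unfolding q_def by (rule quotient_of_denom_pos')
  have x: "x$i = of_int (p i) / of_int (q i)" for i
    by (rule quotient_of_div) (simp add: p_def q_def)
  define d where "d = (\<Prod>i\<in>UNIV. q i)"
  show "d \<noteq> 0" using q by (simp add: d_def prod_pos less_imp_neq[symmetric])
  have "of_int (p i * (\<Prod>j\<in>UNIV-{i}. q j)) = of_int d * x$i" for i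
  proof -
    have "d = q i * (\<Prod>j\<in>UNIV-{i}. q j)" by (simp add: d_def prod.remove)
    then show ?thesis using q[of i] by (simp add: x field_simps)
  qed
  then show "of_int_vec (\<chi> i. p i * (\<Prod>j\<in>UNIV-{i}. q j)) = of_int d *s x"
    by (simp add: of_int_vec_def vec_eq_iff)
qed

lemma int_det_eq_0_iff_nontrivial_kernel:
  fixes A :: "int^'n::finite^'n"
  shows "det A = 0 \<longleftrightarrow> (\<exists>v. v \<noteq> 0 \<and> A *v v = 0)"
proof
  assume "det A = 0"
  then have "det (of_int_mat A :: rat^'n^'n) = 0" by (simp add: det_of_int_mat)
  then obtain x :: "rat^'n" where x: "x \<noteq> 0" "of_int_mat A *v x = 0"
    using det_eq_0_iff_nontrivial_kernel by blast
  obtain d v where "d \<noteq> 0" and v: "of_int_vec v = of_int d *s x"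
    using exists_int_multiple_of_rat_vec .
  then have "(of_int_vec v :: rat^'n) \<noteq> 0" using x(1) by (simp add: vec_eq_iff)
  moreover have "(of_int_vec (A *v v) :: rat^'n) = 0"
  proof -
    have "of_int_mat A *v (of_int d *s x) = of_int d *s (of_int_mat A *v x)"
      by (simp add: vec_eq_iff matrix_vector_mult_def sum_distrib_left mult_ac)
    then show ?thesis using x(2) by (simp flip: of_int_mat_vector_mult add: v)
  qed
  ultimately show "\<exists>v. v \<noteq> 0 \<and> A *v v = 0" by auto
next
  assume "\<exists>v. v \<noteq> 0 \<and> A *v v = 0"
  then obtain v where "v \<noteq> 0" "A *v v = 0" by blast
  then have "(of_int_vec v :: rat^'n) \<noteq> 0" "of_int_mat A *v (of_int_vec v :: rat^'n) = 0"
    by (simp_all add: of_int_mat_vector_mult)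
  then have "det (of_int_mat A :: rat^'n^'n) = 0" using det_eq_0_iff_nontrivial_kernel by blast
  then show "det A = 0" by (simp add: det_of_int_mat)
qed

lemma inj_transpose_mult_on_multi_indices:
  fixes A :: "int^'n::finite^'n"
  assumes nonneg: "\<forall>i j. A$i$j \<ge> 0" and "det A \<noteq> 0"
  shows "inj (\<lambda>\<alpha> j. \<Sum>i\<in>UNIV. \<alpha> i * nat (A$i$j))"
proof -
  define E where "E \<alpha> = (\<lambda>j. \<Sum>i\<in>UNIV. \<alpha> i * nat (A$i$j))" for \<alpha> :: "'n \<Rightarrow> nat"
  have "inj E"
  proof (rule injI)
    fix \<alpha> \<beta> assume "E \<alpha> = E \<beta>"
    define v :: "int^'n" where "v = (\<chi> i. int (\<alpha> i) - int (\<beta> i))"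
    have "(transpose A *v v)$j = int (E \<alpha> j) - int (E \<beta> j)" for j
      using nonneg by (simp add: matrix_vector_mult_def transpose_def v_def E_def of_nat_sum
          sum_subtractf algebra_simps)
    then have "transpose A *v v = 0" using \<open>E \<alpha> = E \<beta>\<close> by (simp add: vec_eq_iff)
    then have "v = 0" using \<open>det A \<noteq> 0\<close> int_det_eq_0_iff_nontrivial_kernel[of "transpose A"] by auto
    then show "\<alpha> = \<beta>" by (simp add: v_def vec_eq_iff fun_eq_iff)
  qed
  moreover have "E = (\<lambda>\<alpha> j. \<Sum>i\<in>UNIV. \<alpha> i * nat (A$i$j))" by (simp add: fun_eq_iff E_def)
  ultimately show ?thesis by simp
qed

lemma cramer_field:
  fixes M :: "'a::field^'n::finite^'n"
  assumes "det M \<noteq> 0"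
  shows "det M *s g = (\<Sum>i\<in>UNIV. det (\<chi> r. if r = i then g else M$r) *s M$i)"
proof -
  have "invertible (transpose M)" using assms by (simp add: invertible_det_nz)
  then obtain x where x: "transpose M *v x = g"
    by (metis invertible_def matrix_vector_mul_assoc matrix_vector_mul_lid)
  have row: "row i M = M$i" for i by (simp add: row_def vec_eq_iff)
  have g: "g = (\<Sum>i\<in>UNIV. x$i *s M$i)"
    unfolding x[symmetric]
    by (simp add: vec_eq_iff matrix_vector_mult_def transpose_def sum_component mult.commute)
  have "det (\<chi> r. if r = k then g else M$r) = x$k * det M" for k
    using cramer_lemma_transpose[of k x M] unfolding row g[symmetric] .
  then show ?thesis
    by (simp add: g vec.scale_sum_right vector_smult_assoc mult.commute)
qed

lemma cramer_int:
  fixes M :: "int^'n::finite^'n"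
  assumes "det M \<noteq> 0"
  shows "det M *s g = (\<Sum>i\<in>UNIV. det (\<chi> r. if r = i then g else M$r) *s M$i)"
proof -
  let ?M = "of_int_mat M :: rat^'n^'n"
  have "(\<chi> r. if r = i then of_int_vec g else ?M$r) = of_int_mat (\<chi> r. if r = i then g else M$r)" for i
    by (simp add: vec_eq_iff of_int_mat_def of_int_vec_def)
  moreover have "?M$i = of_int_vec (M$i)" for i
    by (simp add: vec_eq_iff of_int_mat_def of_int_vec_def)
  ultimately have "(of_int_vec (det M *s g) :: rat^'n)
      = of_int_vec (\<Sum>i\<in>UNIV. det (\<chi> r. if r = i then g else M$r) *s M$i)"
    using cramer_field[of ?M "of_int_vec g"] assms
    by (simp add: of_int_vec_smult of_int_vec_sum det_of_int_mat)
  then show ?thesis by simp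
qed

section \<open>The algebra \<open>A\<^sup>+\<close>\<close>

lemma monom_add: "monom z (\<alpha> + \<beta>) = monom z \<alpha> * monom z \<beta>"
  unfolding monom_def by (simp add: power_add prod.distrib)

lemma monom_0 [simp]: "monom z 0 = 1"
  unfolding monom_def by simp

lemma norm_monom_le_1:
  assumes "z \<in> cpolydisc" shows "norm (monom z \<alpha>) \<le> 1"
proof -
  have "norm (monom z \<alpha>) = (\<Prod>i\<in>UNIV. norm (z$i) ^ \<alpha> i)"
    unfolding monom_def by (simp add: prod_norm[symmetric] norm_power)
  also have "\<dots> \<le> 1"
    using assms unfolding cpolydisc_def by (intro prod_le_1) (auto simp: power_le_one)
  finally show ?thesis .
qed

lemma polydisc_subset_cpolydisc: "polydisc \<subseteq> cpolydisc"
  unfolding polydisc_def cpolydisc_def by (auto simp: less_imp_le)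

lemma Aplus_has_sum_norm: "c \<in> Aplus \<Longrightarrow> ((\<lambda>\<alpha>. norm (c \<alpha>)) has_sum Aplus_norm c) UNIV"
  unfolding Aplus_def Aplus_norm_def by (simp add: has_sum_infsum)

lemma has_sum_norm_imp_Aplus: "((\<lambda>\<alpha>. norm (c \<alpha>)) has_sum s) UNIV \<Longrightarrow> c \<in> Aplus \<and> Aplus_norm c = s"
  unfolding Aplus_def Aplus_norm_def by (auto simp: has_sum_imp_summable infsumI)

lemma Aplus_abs_summable_eval:
  assumes "c \<in> Aplus" "z \<in> cpolydisc"
  shows "(\<lambda>\<alpha>. norm (c \<alpha> * monom z \<alpha>)) summable_on UNIV"
proof (rule Infinite_Sum.abs_summable_on_comparison_test')
  show "(\<lambda>\<alpha>. norm (c \<alpha>)) summable_on UNIV" using assms(1) unfolding Aplus_def by simp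
  show "norm (c \<alpha> * monom z \<alpha>) \<le> norm (c \<alpha>)" for \<alpha>
    using norm_monom_le_1[OF assms(2), of \<alpha>] by (simp add: norm_mult mult_left_le)
qed

lemma Aplus_has_sum_eval:
  assumes "c \<in> Aplus" "z \<in> cpolydisc"
  shows "((\<lambda>\<alpha>. c \<alpha> * monom z \<alpha>) has_sum Aplus_eval c z) UNIV"
  unfolding Aplus_eval_def
  using Infinite_Sum.abs_summable_summable[OF Aplus_abs_summable_eval[OF assms]] by (rule has_sum_infsum)

lemma Aplus_add: "c \<in> Aplus \<Longrightarrow> d \<in> Aplus \<Longrightarrow> c + d \<in> Aplus"
  unfolding Aplus_def
  by (auto intro!: Infinite_Sum.abs_summable_on_comparison_test'[where g="\<lambda>\<alpha>. norm (c \<alpha>) + norm (d \<alpha>)"]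
      summable_on_add norm_triangle_ineq)

lemma Aplus_cmult: "c \<in> Aplus \<Longrightarrow> (\<lambda>\<alpha>. a * c \<alpha>) \<in> Aplus"
  unfolding Aplus_def by (auto simp: norm_mult intro!: summable_on_cmult_right)

lemma Aplus_eval_add:
  assumes "c \<in> Aplus" "d \<in> Aplus" "z \<in> cpolydisc"
  shows "Aplus_eval (c + d) z = Aplus_eval c z + Aplus_eval d z"
  using has_sum_add[OF Aplus_has_sum_eval[OF assms(1,3)] Aplus_has_sum_eval[OF assms(2,3)]]
  unfolding Aplus_eval_def[of "c + d"] by (simp add: distrib_right infsumI)

lemma Aplus_eval_cmult: "Aplus_eval (\<lambda>\<alpha>. a * c \<alpha>) z = a * Aplus_eval c z"
  unfolding Aplus_eval_def by (simp add: mult.assoc infsum_cmult_right')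

definition Aplus_monom :: "('k::finite \<Rightarrow> nat) \<Rightarrow> ('k \<Rightarrow> nat) \<Rightarrow> complex" where
  "Aplus_monom \<alpha> = (\<lambda>\<beta>. if \<beta> = \<alpha> then 1 else 0)"

lemma has_sum_norm_Aplus_monom: "((\<lambda>\<beta>. norm (Aplus_monom \<alpha> \<beta>)) has_sum 1) UNIV"
  by (rule has_sum_finite_neutralI[where B="{\<alpha>}"]) (auto simp: Aplus_monom_def)

lemma Aplus_monom_in_Aplus: "Aplus_monom \<alpha> \<in> Aplus"
  using has_sum_norm_imp_Aplus[OF has_sum_norm_Aplus_monom] by blast

lemma Aplus_norm_Aplus_monom: "Aplus_norm (Aplus_monom \<alpha>) = 1"
  using has_sum_norm_imp_Aplus[OF has_sum_norm_Aplus_monom] by blast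

lemma Aplus_eval_Aplus_monom: "Aplus_eval (Aplus_monom \<alpha>) z = monom z \<alpha>"
proof -
  have "((\<lambda>\<beta>. Aplus_monom \<alpha> \<beta> * monom z \<beta>) has_sum monom z \<alpha>) UNIV"
    by (rule has_sum_finite_neutralI[where B="{\<alpha>}"]) (auto simp: Aplus_monom_def)
  then show ?thesis unfolding Aplus_eval_def by (simp add: infsumI)
qed

definition unit_multi_index :: "'k \<Rightarrow> 'k \<Rightarrow> nat" where
  "unit_multi_index i = (\<lambda>j. if j = i then 1 else 0)"

lemma monom_unit_multi_index: "monom z (unit_multi_index i) = z$i"
  unfolding monom_def unit_multi_index_def by (simp add: if_distrib prod.delta cong: if_cong)

section \<open>Coefficients are determined by values on the polydisc\<close>

lemma finite_multi_index_box: "finite {\<alpha>::'k::finite \<Rightarrow> nat. \<forall>j. \<alpha> j \<le> m}"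
proof -
  have "{\<alpha>::'k \<Rightarrow> nat. \<forall>j. \<alpha> j \<le> m} = PiE UNIV (\<lambda>_. {..m})"
    by (auto simp: PiE_UNIV_domain Pi_def)
  then show ?thesis by (simp add: finite_PiE)
qed

lemma finite_imp_subset_multi_index_box:
  assumes "finite F" shows "\<exists>N. F \<subseteq> {\<alpha>::'k::finite \<Rightarrow> nat. \<forall>j. \<alpha> j \<le> N}"
proof (intro exI subsetI CollectI allI)
  fix \<alpha> j assume "\<alpha> \<in> F"
  have "\<alpha> j \<le> (\<Sum>j\<in>UNIV. \<alpha> j)" by (rule member_le_sum) auto
  also have "\<dots> \<le> (\<Sum>\<alpha>\<in>F. \<Sum>j\<in>UNIV. \<alpha> j)" using assms \<open>\<alpha> \<in> F\<close> by (intro member_le_sum) auto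
  finally show "\<alpha> j \<le> (\<Sum>\<alpha>\<in>F. \<Sum>j\<in>UNIV. \<alpha> j)" .
qed

definition wdeg :: "('k::finite \<Rightarrow> nat) \<Rightarrow> ('k \<Rightarrow> nat) \<Rightarrow> nat" where
  "wdeg w \<alpha> = (\<Sum>j\<in>UNIV. \<alpha> j * w j)"

lemma le_wdeg: "0 < w j \<Longrightarrow> \<alpha> j \<le> wdeg w \<alpha>"
proof -
  assume "0 < w j"
  then have "\<alpha> j \<le> \<alpha> j * w j" by simp
  also have "\<dots> \<le> wdeg w \<alpha>" unfolding wdeg_def by (rule member_le_sum) auto
  finally show ?thesis .
qed

lemma finite_wdeg_fibre: "(\<And>j. 0 < w j) \<Longrightarrow> finite {\<alpha>. wdeg w \<alpha> = m}"
  by (rule finite_subset[OF _ finite_multi_index_box[of m]]) (auto intro: le_wdeg)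

lemma monom_wdeg: "monom (\<chi> j. x ^ w j) \<alpha> = x ^ wdeg w \<alpha>"
  unfolding monom_def wdeg_def by (simp add: power_sum power_mult[symmetric] mult.commute)

text \<open>On the curve \<open>z\<^sub>j = t ^ w j\<close> an element of \<open>A\<^sup>+\<close> becomes a power series in \<open>t\<close>
  whose coefficients are the sums of \<open>c\<close> over the fibres of \<open>wdeg w\<close>.\<close>

lemma Aplus_wdeg_fibre_sum_eq_0:
  fixes c :: "('k::finite \<Rightarrow> nat) \<Rightarrow> complex"
  assumes c: "c \<in> Aplus" and vanish: "\<forall>z\<in>polydisc. Aplus_eval c z = 0" and w: "\<And>j. 0 < w j"
  shows "sum c {\<alpha>. wdeg w \<alpha> = m} = 0"
proof -
  define C where "C m = sum c {\<alpha>. wdeg w \<alpha> = m}" for m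
  have fin: "finite {\<alpha>. wdeg w \<alpha> = m}" for m using w by (rule finite_wdeg_fibre)
  have "((\<lambda>m. sum (\<lambda>\<alpha>. norm (c \<alpha>)) {\<alpha>. wdeg w \<alpha> = m}) has_sum Aplus_norm c) UNIV"
    by (rule has_sum_group_fibres[OF fin Aplus_has_sum_norm[OF c]])
  then have "(\<lambda>m. norm (C m)) summable_on UNIV"
    by (rule has_sum_imp_summable[THEN summable_on_comparison_test]) (auto simp: C_def norm_sum)
  moreover have "((\<lambda>m. C m * of_real t ^ m) has_sum 0) UNIV" if t: "0 < t" "t < 1" for t :: real
  proof -
    define z :: "complex^'k" where "z = (\<chi> j. of_real t ^ w j)"
    have "z \<in> polydisc"
      using t w unfolding polydisc_def z_def by (auto simp: norm_power power_less_one_iff)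
    then have "((\<lambda>\<alpha>. c \<alpha> * of_real t ^ wdeg w \<alpha>) has_sum 0) UNIV"
      using Aplus_has_sum_eval[OF c] polydisc_subset_cpolydisc vanish
      by (force simp: z_def monom_wdeg)
    moreover have "sum (\<lambda>\<alpha>. c \<alpha> * of_real t ^ wdeg w \<alpha>) {\<alpha>. wdeg w \<alpha> = m} = C m * of_real t ^ m" for m
      unfolding C_def sum_distrib_right by (rule sum.cong) auto
    ultimately show ?thesis using has_sum_group_fibres[OF fin] by fastforce
  qed
  ultimately have "C m = 0" by (rule powser_coeffs_eq_0)
  then show ?thesis by (simp add: C_def)
qed

text \<open>The weights \<open>(N + 1) ^ i\<close> read off a box of side \<open>N\<close> as base \<open>N + 1\<close> digits.\<close>

lemma exists_wdeg_inj_on_box: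
  "\<exists>w. (\<forall>j. 0 < w j) \<and> inj_on (wdeg w) {\<alpha>::'k::finite \<Rightarrow> nat. \<forall>j. \<alpha> j \<le> N}"
proof -
  obtain idx :: "'k \<Rightarrow> nat" where idx: "bij_betw idx UNIV {..<CARD('k)}"
    using ex_bij_betw_finite_nat[of "UNIV::'k set"] by (auto simp: atLeast0LessThan)
  define iv where "iv = the_inv_into UNIV idx"
  have iv: "iv (idx j) = j" for j
    unfolding iv_def using idx by (simp add: bij_betw_def the_inv_into_f_f)
  define w where "w j = Suc N ^ idx j" for j
  have digits: "wdeg w \<gamma> = (\<Sum>i<CARD('k). \<gamma> (iv i) * Suc N ^ i)" for \<gamma>
    unfolding wdeg_def w_def using sum.reindex_bij_betw[OF idx, of "\<lambda>i. \<gamma> (iv i) * Suc N ^ i"]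
    by (simp add: iv)
  have "inj_on (wdeg w) {\<alpha>. \<forall>j. \<alpha> j \<le> N}"
  proof (rule inj_onI, rule ext)
    fix \<alpha> \<beta> j assume "\<alpha> \<in> {\<alpha>. \<forall>j. \<alpha> j \<le> N}" "\<beta> \<in> {\<alpha>. \<forall>j. \<alpha> j \<le> N}" "wdeg w \<alpha> = wdeg w \<beta>"
    then have "\<forall>i<CARD('k). \<alpha> (iv i) = \<beta> (iv i)"
      by (intro base_expansion_inj[where B="Suc N"]) (auto simp: digits le_imp_less_Suc)
    moreover have "idx j < CARD('k)" using idx by (auto simp: bij_betw_def)
    ultimately show "\<alpha> j = \<beta> j" using iv by metis
  qed
  then show ?thesis by (intro exI[of _ w]) (simp add: w_def)
qed

text \<open>Choose a finite set \<open>F\<close> carrying all but \<open>\<epsilon>\<close> of the norm of \<open>c\<close>, and weights separating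
  \<open>F \<union> {\<alpha>\<^sub>0}\<close>: the vanishing fibre sum through \<open>\<alpha>\<^sub>0\<close> then bounds \<open>c \<alpha>\<^sub>0\<close> by \<open>\<epsilon>\<close>.\<close>

lemma Aplus_coeff_eq_0:
  fixes c :: "('k::finite \<Rightarrow> nat) \<Rightarrow> complex"
  assumes c: "c \<in> Aplus" and vanish: "\<forall>z\<in>polydisc. Aplus_eval c z = 0"
  shows "c \<alpha>\<^sub>0 = 0"
proof -
  have "norm (c \<alpha>\<^sub>0) \<le> \<epsilon>" if "\<epsilon> > 0" for \<epsilon>
  proof -
    obtain F where F: "finite F" "dist (sum (\<lambda>\<alpha>. norm (c \<alpha>)) F) (Aplus_norm c) \<le> \<epsilon>"
      using has_sum_finite_approximation[OF Aplus_has_sum_norm[OF c] \<open>\<epsilon> > 0\<close>] by auto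
    obtain N where box: "insert \<alpha>\<^sub>0 F \<subseteq> {\<alpha>. \<forall>j. \<alpha> j \<le> N}"
      using finite_imp_subset_multi_index_box F(1) by blast
    obtain w :: "'k \<Rightarrow> nat" where w: "\<And>j. 0 < w j" and inj: "inj_on (wdeg w) {\<alpha>. \<forall>j. \<alpha> j \<le> N}"
      using exists_wdeg_inj_on_box by blast
    define G where "G = {\<alpha>. wdeg w \<alpha> = wdeg w \<alpha>\<^sub>0} - {\<alpha>\<^sub>0}"
    have fin: "finite {\<alpha>. wdeg w \<alpha> = wdeg w \<alpha>\<^sub>0}" using w by (rule finite_wdeg_fibre)
    have "c \<alpha>\<^sub>0 + sum c G = 0"
      using Aplus_wdeg_fibre_sum_eq_0[OF c vanish w] sum.remove[OF fin, of \<alpha>\<^sub>0 c] by (simp add: G_def)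
    then have "norm (c \<alpha>\<^sub>0) = norm (sum c G)" by (simp add: add_eq_0_iff)
    also have "\<dots> \<le> sum (\<lambda>\<alpha>. norm (c \<alpha>)) G" by (rule norm_sum)
    also have "\<dots> = sum (\<lambda>\<alpha>. norm (c \<alpha>)) (G \<union> F) - sum (\<lambda>\<alpha>. norm (c \<alpha>)) F"
    proof -
      have "\<alpha> = \<alpha>\<^sub>0" if "\<alpha> \<in> F" "wdeg w \<alpha> = wdeg w \<alpha>\<^sub>0" for \<alpha>
        using inj box that unfolding inj_on_def by blast
      then have "G \<inter> F = {}" by (auto simp: G_def)
      then show ?thesis using fin F(1) by (simp add: G_def sum.union_disjoint)
    qed
    also have "\<dots> \<le> Aplus_norm c - sum (\<lambda>\<alpha>. norm (c \<alpha>)) F"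
    proof -
      have "finite (G \<union> F)" using fin F(1) by (simp add: G_def)
      from finite_sum_le_has_sum[OF Aplus_has_sum_norm[OF c] this] show ?thesis by simp
    qed
    also have "\<dots> \<le> \<epsilon>" using F(2) by (simp add: dist_real_def)
    finally show ?thesis .
  qed
  from this[of "norm (c \<alpha>\<^sub>0) / 2"] show ?thesis
    by (cases "c \<alpha>\<^sub>0 = 0") simp_all
qed

lemma Aplus_eval_inject:
  fixes c d :: "('k::finite \<Rightarrow> nat) \<Rightarrow> complex"
  assumes c: "c \<in> Aplus" and d: "d \<in> Aplus" and eq: "\<forall>z\<in>polydisc. Aplus_eval c z = Aplus_eval d z"
  shows "c = d"
proof -
  have "c + (\<lambda>\<alpha>. -1 * d \<alpha>) \<in> Aplus" by (intro Aplus_add Aplus_cmult c d)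
  moreover have "\<forall>z\<in>polydisc. Aplus_eval (c + (\<lambda>\<alpha>. -1 * d \<alpha>)) z = 0"
  proof
    fix z :: "complex^'k" assume "z \<in> polydisc"
    then have "z \<in> cpolydisc" using polydisc_subset_cpolydisc by blast
    then have "Aplus_eval (c + (\<lambda>\<alpha>. -1 * d \<alpha>)) z = Aplus_eval c z + Aplus_eval (\<lambda>\<alpha>. -1 * d \<alpha>) z"
      by (intro Aplus_eval_add Aplus_cmult c d)
    then show "Aplus_eval (c + (\<lambda>\<alpha>. -1 * d \<alpha>)) z = 0"
      using eq \<open>z \<in> polydisc\<close> by (simp only: Aplus_eval_cmult) simp
  qed
  ultimately have "(c + (\<lambda>\<alpha>. -1 * d \<alpha>)) \<alpha> = 0" for \<alpha>
    by (rule Aplus_coeff_eq_0)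
  then show ?thesis by (simp add: fun_eq_iff)
qed

section \<open>Cauchy products\<close>

lemma finite_add_fibre: "finite {p :: ('k::finite \<Rightarrow> nat) \<times> ('k \<Rightarrow> nat). fst p + snd p = \<gamma>}"
proof (rule finite_subset)
  let ?B = "{\<alpha>::'k \<Rightarrow> nat. \<forall>j. \<alpha> j \<le> sum \<gamma> UNIV}"
  have "\<gamma> j \<le> sum \<gamma> UNIV" for j by (rule member_le_sum) auto
  then have "a j \<le> sum \<gamma> UNIV \<and> b j \<le> sum \<gamma> UNIV" if "a + b = \<gamma>" for a b :: "'k \<Rightarrow> nat" and j
    using that by (metis add_leD1 add_leD2 plus_fun_apply)
  then show "{p. fst p + snd p = \<gamma>} \<subseteq> ?B \<times> ?B" by auto
  show "finite (?B \<times> ?B)" using finite_multi_index_box by blast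
qed

definition cauchy_prod ::
    "(('k::finite \<Rightarrow> nat) \<Rightarrow> complex) \<Rightarrow> (('k \<Rightarrow> nat) \<Rightarrow> complex) \<Rightarrow> ('k \<Rightarrow> nat) \<Rightarrow> complex" where
  "cauchy_prod b b' \<gamma> = (\<Sum>p\<in>{p. fst p + snd p = \<gamma>}. b (fst p) * b' (snd p))"

definition cauchy_prod_majorant ::
    "(('k::finite \<Rightarrow> nat) \<Rightarrow> complex) \<Rightarrow> (('k \<Rightarrow> nat) \<Rightarrow> complex) \<Rightarrow> ('k \<Rightarrow> nat) \<Rightarrow> real" where
  "cauchy_prod_majorant b b' \<gamma> = (\<Sum>p\<in>{p. fst p + snd p = \<gamma>}. norm (b (fst p) * b' (snd p)))"

lemma norm_cauchy_prod_le: "norm (cauchy_prod b b' \<gamma>) \<le> cauchy_prod_majorant b b' \<gamma>"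
  unfolding cauchy_prod_def cauchy_prod_majorant_def by (rule norm_sum)

lemma has_sum_cauchy_prod_majorant:
  assumes "b \<in> Aplus" "b' \<in> Aplus"
  shows "(cauchy_prod_majorant b b' has_sum Aplus_norm b * Aplus_norm b') UNIV"
proof -
  have "(\<lambda>x. norm (norm (b x))) summable_on UNIV" "(\<lambda>x. norm (norm (b' x))) summable_on UNIV"
    using assms by (simp_all add: Aplus_def)
  from has_sum_product[OF this]
  have "((\<lambda>p. norm (b (fst p) * b' (snd p))) has_sum Aplus_norm b * Aplus_norm b') UNIV"
    by (simp add: Aplus_norm_def case_prod_unfold norm_mult)
  then show ?thesis
    unfolding cauchy_prod_majorant_def by (rule has_sum_group_fibres[OF finite_add_fibre])
qed

lemma cauchy_prod_in_Aplus:
  assumes "b \<in> Aplus" "b' \<in> Aplus" shows "cauchy_prod b b' \<in> Aplus"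
proof -
  have "(\<lambda>\<gamma>. norm (cauchy_prod b b' \<gamma>)) summable_on UNIV"
    by (rule summable_on_comparison_test[OF has_sum_imp_summable[OF has_sum_cauchy_prod_majorant[OF assms]]])
      (auto intro: norm_cauchy_prod_le)
  then show ?thesis by (simp add: Aplus_def)
qed

lemma Aplus_eval_cauchy_prod:
  assumes b: "b \<in> Aplus" and b': "b' \<in> Aplus" and z: "z \<in> cpolydisc"
  shows "Aplus_eval (cauchy_prod b b') z = Aplus_eval b z * Aplus_eval b' z"
proof -
  let ?F = "\<lambda>p. b (fst p) * monom z (fst p) * (b' (snd p) * monom z (snd p))"
  have "(?F has_sum Aplus_eval b z * Aplus_eval b' z) UNIV"
    using has_sum_product[OF Aplus_abs_summable_eval[OF b z] Aplus_abs_summable_eval[OF b' z]]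
    by (simp add: Aplus_eval_def case_prod_unfold)
  from has_sum_group_fibres[OF finite_add_fibre this]
  have "((\<lambda>\<gamma>. sum ?F {p. fst p + snd p = \<gamma>}) has_sum Aplus_eval b z * Aplus_eval b' z) UNIV" .
  moreover have "sum ?F {p. fst p + snd p = \<gamma>} = cauchy_prod b b' \<gamma> * monom z \<gamma>" for \<gamma>
    unfolding cauchy_prod_def sum_distrib_right by (rule sum.cong) (auto simp: monom_add mult_ac)
  ultimately show ?thesis unfolding Aplus_eval_def by (simp add: infsumI)
qed

text \<open>Multiplicativity of the norm forces equality in the termwise bound by the majorant.\<close>

lemma cauchy_prod_nonzero_if_norm_mult:
  assumes b: "b \<in> Aplus" and b': "b' \<in> Aplus"
    and mult: "Aplus_norm (cauchy_prod b b') = Aplus_norm b * Aplus_norm b'"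
    and "b \<alpha> \<noteq> 0" "b' \<beta> \<noteq> 0"
  shows "cauchy_prod b b' (\<alpha> + \<beta>) \<noteq> 0"
proof -
  let ?D = "cauchy_prod_majorant b b'"
  have "((\<lambda>\<gamma>. ?D \<gamma> - norm (cauchy_prod b b' \<gamma>)) has_sum 0) UNIV"
    using has_sum_add[OF has_sum_cauchy_prod_majorant[OF b b']
        has_sum_uminusI[OF Aplus_has_sum_norm[OF cauchy_prod_in_Aplus[OF b b']]]] mult
    by simp
  then have "?D (\<alpha> + \<beta>) - norm (cauchy_prod b b' (\<alpha> + \<beta>)) = 0"
    by (rule nonneg_has_sum_le_0D) (simp_all add: norm_cauchy_prod_le)
  moreover have "0 < ?D (\<alpha> + \<beta>)"
  proof -
    have "0 < norm (b \<alpha> * b' \<beta>)" using assms by simp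
    also have "\<dots> \<le> ?D (\<alpha> + \<beta>)"
      using member_le_sum[of "(\<alpha>, \<beta>)" "{p. fst p + snd p = \<alpha> + \<beta>}" "\<lambda>p. norm (b (fst p) * b' (snd p))"]
      by (simp add: cauchy_prod_majorant_def finite_add_fibre)
    finally show ?thesis .
  qed
  ultimately show ?thesis by auto
qed

section \<open>Isometric composition operators are monomial\<close>

lemma norm_add_and_diff_eq_sum_imp_0:
  fixes a b :: complex
  assumes "norm (a + b) = norm a + norm b" "norm (a - b) = norm a + norm b"
  shows "a = 0 \<or> b = 0"
proof -
  have "norm (a + b)^2 + norm (a - b)^2 = 2 * (norm a ^2 + norm b ^2)"
    by (simp add: dot_square_norm[symmetric] inner_add_left inner_add_right inner_diff_left
        inner_diff_right inner_commute algebra_simps)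
  then have "norm a * norm b = 0" using assms by (simp add: algebra_simps power2_eq_square)
  then show ?thesis by simp
qed

locale isometric_composition =
  fixes \<phi> :: "complex^'k::finite \<Rightarrow> complex^'k"
  assumes maps_into: "\<forall>z\<in>polydisc. \<phi> z \<in> cpolydisc"
    and bounded: "\<forall>c\<in>Aplus. \<exists>d\<in>Aplus. is_comp \<phi> c d"
    and isometric: "\<forall>c\<in>Aplus. \<forall>d\<in>Aplus. is_comp \<phi> c d \<longrightarrow> Aplus_norm d = Aplus_norm c"
begin

text \<open>\<open>comp_monom \<alpha>\<close> is the coefficient family of \<open>\<phi>^\<alpha> = C\<^sub>\<phi> z^\<alpha>\<close>.\<close>

definition comp_monom :: "('k \<Rightarrow> nat) \<Rightarrow> ('k \<Rightarrow> nat) \<Rightarrow> complex" where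
  "comp_monom \<alpha> = (SOME d. d \<in> Aplus \<and> is_comp \<phi> (Aplus_monom \<alpha>) d)"

lemma comp_monom_spec: "comp_monom \<alpha> \<in> Aplus \<and> is_comp \<phi> (Aplus_monom \<alpha>) (comp_monom \<alpha>)"
proof -
  have "\<exists>d. d \<in> Aplus \<and> is_comp \<phi> (Aplus_monom \<alpha>) d" using bounded Aplus_monom_in_Aplus by blast
  then show ?thesis unfolding comp_monom_def by (rule someI_ex)
qed

lemma comp_monom_in_Aplus: "comp_monom \<alpha> \<in> Aplus"
  using comp_monom_spec by blast

lemma is_comp_comp_monom: "is_comp \<phi> (Aplus_monom \<alpha>) (comp_monom \<alpha>)"
  using comp_monom_spec by blast

lemma Aplus_eval_comp_monom: "z \<in> polydisc \<Longrightarrow> Aplus_eval (comp_monom \<alpha>) z = monom (\<phi> z) \<alpha>"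
  using is_comp_comp_monom by (simp add: is_comp_def Aplus_eval_Aplus_monom)

lemma Aplus_norm_comp_monom: "Aplus_norm (comp_monom \<alpha>) = 1"
  using isometric comp_monom_in_Aplus is_comp_comp_monom Aplus_monom_in_Aplus Aplus_norm_Aplus_monom by metis

lemma comp_monom_unique:
  "d \<in> Aplus \<Longrightarrow> \<forall>z\<in>polydisc. Aplus_eval d z = monom (\<phi> z) \<alpha> \<Longrightarrow> d = comp_monom \<alpha>"
  by (rule Aplus_eval_inject) (simp_all add: comp_monom_in_Aplus Aplus_eval_comp_monom)

lemma comp_monom_nonzero: "\<exists>\<gamma>. comp_monom \<alpha> \<gamma> \<noteq> 0"
proof (rule ccontr)
  assume "\<nexists>\<gamma>. comp_monom \<alpha> \<gamma> \<noteq> 0"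
  then have "Aplus_norm (comp_monom \<alpha>) = 0" by (simp add: Aplus_norm_def)
  then show False by (simp add: Aplus_norm_comp_monom)
qed

lemma comp_monom_0: "comp_monom 0 = Aplus_monom 0"
  by (rule comp_monom_unique[symmetric]) (simp_all add: Aplus_monom_in_Aplus Aplus_eval_Aplus_monom)

lemma comp_monom_add: "comp_monom (\<alpha> + \<beta>) = cauchy_prod (comp_monom \<alpha>) (comp_monom \<beta>)"
  using polydisc_subset_cpolydisc
  by (intro comp_monom_unique[symmetric])
    (auto simp: cauchy_prod_in_Aplus Aplus_eval_cauchy_prod comp_monom_in_Aplus Aplus_eval_comp_monom monom_add)

lemma comp_monom_add_nonzero:
  assumes "comp_monom \<alpha> v \<noteq> 0" "comp_monom \<beta> w \<noteq> 0"
  shows "comp_monom (\<alpha> + \<beta>) (v + w) \<noteq> 0"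
proof -
  have "Aplus_norm (cauchy_prod (comp_monom \<alpha>) (comp_monom \<beta>))
      = Aplus_norm (comp_monom \<alpha>) * Aplus_norm (comp_monom \<beta>)"
    by (simp flip: comp_monom_add add: Aplus_norm_comp_monom)
  from cauchy_prod_nonzero_if_norm_mult[OF comp_monom_in_Aplus comp_monom_in_Aplus this assms]
  show ?thesis by (simp add: comp_monom_add)
qed

lemma comp_monom_mult_nonzero:
  assumes "comp_monom \<alpha> v \<noteq> 0"
  shows "comp_monom (of_nat m * \<alpha>) (of_nat m * v) \<noteq> 0"
proof (induction m)
  case 0
  show ?case using comp_monom_0 by (simp add: Aplus_monom_def flip: zero_fun_def)
next
  case (Suc m)
  have "of_nat (Suc m) * f = f + of_nat m * f" for f :: "'k \<Rightarrow> nat"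
    by (simp only: of_nat_Suc distrib_right mult_1_left)
  then show ?case using comp_monom_add_nonzero[OF assms Suc] by metis
qed

lemma comp_monom_sum_nonzero:
  assumes "finite T" "\<forall>t\<in>T. comp_monom (\<alpha> t) (s t) \<noteq> 0"
  shows "comp_monom (\<Sum>t\<in>T. of_nat (n t) * \<alpha> t) (\<Sum>t\<in>T. of_nat (n t) * s t) \<noteq> 0"
  using assms
proof (induction T rule: finite_induct)
  case empty
  show ?case using comp_monom_0 by (simp add: Aplus_monom_def flip: zero_fun_def)
next
  case (insert t T)
  then show ?case
    unfolding sum.insert[OF insert.hyps]
    by (intro comp_monom_add_nonzero comp_monom_mult_nonzero insert.IH) (simp_all add: insert.prems)
qed

text \<open>Testing the isometry on \<open>z^\<alpha> + l z^\<beta>\<close> with \<open>|l| = 1\<close> shows that there is no cancellation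
  in \<open>\<phi>^\<alpha> + l \<phi>^\<beta>\<close>.\<close>

lemma norm_comp_monom_add:
  assumes ne: "\<alpha> \<noteq> \<beta>" and l: "norm l = 1"
  shows "norm (comp_monom \<alpha> x + l * comp_monom \<beta> x) = norm (comp_monom \<alpha> x) + norm (comp_monom \<beta> x)"
proof -
  let ?c = "Aplus_monom \<alpha> + (\<lambda>y. l * Aplus_monom \<beta> y)"
  let ?d = "comp_monom \<alpha> + (\<lambda>y. l * comp_monom \<beta> y)"
  have c: "?c \<in> Aplus" by (intro Aplus_add Aplus_cmult Aplus_monom_in_Aplus)
  have d: "?d \<in> Aplus" by (intro Aplus_add Aplus_cmult comp_monom_in_Aplus)
  have "is_comp \<phi> ?c ?d"
    unfolding is_comp_def
  proof
    fix z :: "complex^'k" assume z: "z \<in> polydisc"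
    then have "z \<in> cpolydisc" "\<phi> z \<in> cpolydisc" using maps_into polydisc_subset_cpolydisc by auto
    then show "Aplus_eval ?d z = Aplus_eval ?c (\<phi> z)"
      using z by (simp add: Aplus_eval_add Aplus_cmult Aplus_monom_in_Aplus comp_monom_in_Aplus
          Aplus_eval_cmult Aplus_eval_comp_monom Aplus_eval_Aplus_monom)
  qed
  then have "Aplus_norm ?d = Aplus_norm ?c" using isometric c d by blast
  also have "Aplus_norm ?c = 2"
  proof -
    have "((\<lambda>y. norm (?c y)) has_sum 2) UNIV"
      by (rule has_sum_finite_neutralI[where B="{\<alpha>,\<beta>}"]) (use ne l in \<open>auto simp: Aplus_monom_def\<close>)
    then show ?thesis using has_sum_norm_imp_Aplus by blast
  qed
  finally have "((\<lambda>y. norm (comp_monom \<alpha> y) + norm (comp_monom \<beta> y) + - norm (?d y)) has_sum 1 + 1 + - 2) UNIV"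
    using Aplus_has_sum_norm[OF comp_monom_in_Aplus] Aplus_has_sum_norm[OF d]
    by (intro has_sum_add has_sum_uminusI) (simp_all add: Aplus_norm_comp_monom)
  moreover have "norm (?d y) \<le> norm (comp_monom \<alpha> y) + norm (comp_monom \<beta> y)" for y
    using norm_triangle_ineq[of "comp_monom \<alpha> y" "l * comp_monom \<beta> y"] l by (simp add: norm_mult)
  ultimately have "norm (comp_monom \<alpha> x) + norm (comp_monom \<beta> x) + - norm (?d x) = 0"
    by (intro nonneg_has_sum_le_0D[where x=x]) auto
  then show ?thesis by simp
qed

lemma comp_monom_disjoint_supports:
  assumes "\<alpha> \<noteq> \<beta>" shows "comp_monom \<alpha> x = 0 \<or> comp_monom \<beta> x = 0"
  using norm_comp_monom_add[OF assms, of 1] norm_comp_monom_add[OF assms, of "-1"]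
  by (intro norm_add_and_diff_eq_sum_imp_0) simp_all

text \<open>An integer relation among points \<open>s t\<close> of the supports of the \<open>\<phi>\<^sub>i\<close> collapses: split it into
  positive and negative parts, which are then points of the supports of \<open>\<phi>^\<alpha>\<close> and \<open>\<phi>^\<alpha>'\<close>
  for two multi-indices; disjointness of supports forces \<open>\<alpha> = \<alpha>'\<close>.\<close>

lemma supp_relation_collapses:
  assumes fin: "finite T" and supp: "\<forall>t\<in>T. comp_monom (unit_multi_index (idx t)) (s t) \<noteq> 0"
    and rel: "\<forall>j. (\<Sum>t\<in>T. w t * int (s t j)) = 0"
  shows "(\<Sum>t\<in>T. if idx t = j then w t else 0) = 0"
proof -
  define pos where "pos t = nat (w t)" for t
  define neg where "neg t = nat (- w t)" for t
  let ?\<alpha> = "\<lambda>n. \<Sum>t\<in>T. of_nat (n t) * unit_multi_index (idx t)"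
  let ?P = "\<lambda>n. \<Sum>t\<in>T. of_nat (n t) * s t"
  have "?P pos = ?P neg"
  proof
    fix j
    have "int (?P pos j) - int (?P neg j) = (\<Sum>t\<in>T. w t * int (s t j))"
      unfolding pos_def neg_def sum_fun_apply times_fun_apply of_nat_fun_apply of_nat_id
      by (rule int_sum_pos_part_minus_neg_part)
    then show "?P pos j = ?P neg j" using rel by simp
  qed
  have "comp_monom (?\<alpha> pos) (?P pos) \<noteq> 0"
    by (rule comp_monom_sum_nonzero[OF fin supp])
  moreover have "comp_monom (?\<alpha> neg) (?P pos) \<noteq> 0"
    unfolding \<open>?P pos = ?P neg\<close> by (rule comp_monom_sum_nonzero[OF fin supp])
  ultimately have "?\<alpha> pos = ?\<alpha> neg"
    using comp_monom_disjoint_supports[of "?\<alpha> pos" "?\<alpha> neg" "?P pos"] by blast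
  have "(\<Sum>t\<in>T. if idx t = j then w t else 0) = (\<Sum>t\<in>T. w t * int (unit_multi_index (idx t) j))"
    by (rule sum.cong) (auto simp: unit_multi_index_def)
  also have "\<dots> = int (?\<alpha> pos j) - int (?\<alpha> neg j)"
    unfolding pos_def neg_def sum_fun_apply times_fun_apply of_nat_fun_apply of_nat_id
    by (rule int_sum_pos_part_minus_neg_part[symmetric])
  also have "\<dots> = 0" by (simp only: \<open>?\<alpha> pos = ?\<alpha> neg\<close> diff_self)
  finally show ?thesis .
qed

lemma det_supp_matrix_nonzero:
  assumes supp: "\<forall>i. comp_monom (unit_multi_index i) (\<sigma> i) \<noteq> 0"
  shows "det (\<chi> i j. int (\<sigma> i j)) \<noteq> 0"
proof
  assume "det (\<chi> i j. int (\<sigma> i j)) = 0"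
  then obtain v where v: "v \<noteq> 0" "transpose (\<chi> i j. int (\<sigma> i j)) *v v = 0"
    using int_det_eq_0_iff_nontrivial_kernel[of "transpose (\<chi> i j. int (\<sigma> i j))"] by auto
  then have "\<forall>j. (\<Sum>i\<in>UNIV. v$i * int (\<sigma> i j)) = 0"
    by (simp add: vec_eq_iff matrix_vector_mult_def transpose_def mult.commute)
  then have "(\<Sum>i\<in>UNIV. if i = j then v$i else 0) = 0" for j
    using supp_relation_collapses[where idx=id and T=UNIV and s=\<sigma> and w="\<lambda>i. v$i"] supp by simp
  then show False using v(1) by (simp add: vec_eq_iff)
qed

text \<open>Cramer's rule expresses a second support point \<open>\<gamma>\<close> of \<open>\<phi>\<^sub>i\<close> through a basis of support points
  containing \<open>\<beta>\<close>; collapsing that relation leaves \<open>det M \<cdot> \<gamma> = det M \<cdot> \<beta>\<close>.\<close>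

lemma comp_monom_unit_single_support:
  assumes \<beta>: "comp_monom (unit_multi_index i) \<beta> \<noteq> 0" and \<gamma>: "comp_monom (unit_multi_index i) \<gamma> \<noteq> 0"
  shows "\<beta> = \<gamma>"
proof -
  have "\<forall>r. \<exists>\<gamma>. comp_monom (unit_multi_index r) \<gamma> \<noteq> 0" using comp_monom_nonzero by blast
  from choice[OF this] obtain \<sigma> where "\<forall>r. comp_monom (unit_multi_index r) (\<sigma> r) \<noteq> 0"
    by blast
  then have supp: "\<forall>r. comp_monom (unit_multi_index r) ((\<sigma>(i := \<beta>)) r) \<noteq> 0" using \<beta> by simp
  define M :: "int^'k^'k" where "M = (\<chi> r j. int ((\<sigma>(i := \<beta>)) r j))"
  have "det M \<noteq> 0" unfolding M_def by (rule det_supp_matrix_nonzero[OF supp])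
  define c where "c r = det (\<chi> r'. if r' = r then (\<chi> j. int (\<gamma> j)) else M$r')" for r
  have cramer: "det M * int (\<gamma> j) = (\<Sum>r\<in>UNIV. c r * int ((\<sigma>(i := \<beta>)) r j))" for j
    using arg_cong[OF cramer_int[OF \<open>det M \<noteq> 0\<close>, of "\<chi> j. int (\<gamma> j)"], of "\<lambda>v. v$j"]
    by (simp add: c_def sum_component M_def)
  let ?idx = "\<lambda>t. case t of None \<Rightarrow> i | Some r \<Rightarrow> r"
  let ?s = "\<lambda>t. case t of None \<Rightarrow> \<gamma> | Some r \<Rightarrow> (\<sigma>(i := \<beta>)) r"
  let ?w = "\<lambda>t. case t of None \<Rightarrow> det M | Some r \<Rightarrow> - c r"
  have collapse: "(\<Sum>t\<in>UNIV. if ?idx t = j then ?w t else 0) = 0" for j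
  proof (rule supp_relation_collapses)
    show "\<forall>t\<in>UNIV. comp_monom (unit_multi_index (?idx t)) (?s t) \<noteq> 0"
      using supp \<gamma> by (simp split: option.split)
    show "\<forall>j. (\<Sum>t\<in>UNIV. ?w t * int (?s t j)) = 0"
      using cramer by (simp add: sum_UNIV_option sum_negf)
  qed simp
  have coll: "(if j = i then det M else 0) = c j" for j
    using collapse[of j] by (auto simp: sum_UNIV_option cong: if_cong)
  have "det M * int (\<gamma> j) = det M * int (\<beta> j)" for j
  proof -
    have "(\<Sum>r\<in>UNIV. c r * int ((\<sigma>(i := \<beta>)) r j)) = (\<Sum>r\<in>UNIV. if r = i then det M * int (\<beta> j) else 0)"
      by (rule sum.cong) (auto simp flip: coll)
    then show ?thesis using cramer by simp
  qed
  then show "\<beta> = \<gamma>" using \<open>det M \<noteq> 0\<close> by (simp add: fun_eq_iff)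
qed

lemma monomial_form:
  "\<exists>(A::int^'k^'k) (\<epsilon>::complex^'k).
     (\<forall>i j. A$i$j \<ge> 0) \<and> det A \<noteq> 0 \<and> (\<forall>i. norm (\<epsilon>$i) = 1) \<and>
     (\<forall>z\<in>polydisc. \<forall>i. \<phi> z $ i = \<epsilon>$i * (\<Prod>j\<in>UNIV. (z$j) ^ nat (A$i$j)))"
proof -
  have "\<forall>i. \<exists>\<gamma>. comp_monom (unit_multi_index i) \<gamma> \<noteq> 0" using comp_monom_nonzero by blast
  from choice[OF this] obtain \<sigma> where \<sigma>: "\<forall>i. comp_monom (unit_multi_index i) (\<sigma> i) \<noteq> 0"
    by blast
  define \<epsilon> :: "complex^'k" where "\<epsilon> = (\<chi> i. comp_monom (unit_multi_index i) (\<sigma> i))"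
  have supp: "comp_monom (unit_multi_index i) \<gamma> = 0" if "\<gamma> \<noteq> \<sigma> i" for i \<gamma>
    using comp_monom_unit_single_support \<sigma> that by blast
  show ?thesis
  proof (intro exI conjI)
    show "det (\<chi> i j. int (\<sigma> i j)) \<noteq> 0" by (rule det_supp_matrix_nonzero[OF \<sigma>])
    show "\<forall>i. norm (\<epsilon>$i) = 1"
    proof
      fix i
      have "((\<lambda>\<gamma>. norm (comp_monom (unit_multi_index i) \<gamma>)) has_sum norm (\<epsilon>$i)) UNIV"
        by (rule has_sum_finite_neutralI[where B="{\<sigma> i}"]) (auto simp: supp \<epsilon>_def)
      then show "norm (\<epsilon>$i) = 1"
        using Aplus_has_sum_norm[OF comp_monom_in_Aplus] Aplus_norm_comp_monom has_sum_unique by metis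
    qed
    show "\<forall>z\<in>polydisc. \<forall>i. \<phi> z $ i = \<epsilon>$i * (\<Prod>j\<in>UNIV. (z$j) ^ nat ((\<chi> i j. int (\<sigma> i j))$i$j))"
    proof (intro ballI allI)
      fix z :: "complex^'k" and i assume z: "z \<in> polydisc"
      have "((\<lambda>\<gamma>. comp_monom (unit_multi_index i) \<gamma> * monom z \<gamma>) has_sum \<epsilon>$i * monom z (\<sigma> i)) UNIV"
        by (rule has_sum_finite_neutralI[where B="{\<sigma> i}"]) (auto simp: supp \<epsilon>_def)
      then have "Aplus_eval (comp_monom (unit_multi_index i)) z = \<epsilon>$i * monom z (\<sigma> i)"
        unfolding Aplus_eval_def by (rule infsumI)
      then have "\<phi> z $ i = \<epsilon>$i * monom z (\<sigma> i)"
        using Aplus_eval_comp_monom[OF z, of "unit_multi_index i"] by (simp add: monom_unit_multi_index)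
      then show "\<phi> z $ i = \<epsilon>$i * (\<Prod>j\<in>UNIV. (z$j) ^ nat ((\<chi> i j. int (\<sigma> i j))$i$j))"
        by (simp add: monom_def)
    qed
  qed simp
qed

end

section \<open>Monomial composition operators are isometric\<close>

lemma monomial_imp_isometric:
  fixes \<phi> :: "complex^'k::finite \<Rightarrow> complex^'k" and A :: "int^'k^'k" and \<epsilon> :: "complex^'k"
  assumes maps_into: "\<forall>z\<in>polydisc. \<phi> z \<in> cpolydisc"
    and nonneg: "\<forall>i j. A$i$j \<ge> 0" and "det A \<noteq> 0" and \<epsilon>: "\<forall>i. norm (\<epsilon>$i) = 1"
    and \<phi>: "\<forall>z\<in>polydisc. \<forall>i. \<phi> z $ i = \<epsilon>$i * (\<Prod>j\<in>UNIV. (z$j) ^ nat (A$i$j))"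
    and c: "c \<in> Aplus" and d: "d \<in> Aplus" and "is_comp \<phi> c d"
  shows "Aplus_norm d = Aplus_norm c"
proof -
  define E where "E \<alpha> = (\<lambda>j. \<Sum>i\<in>UNIV. \<alpha> i * nat (A$i$j))" for \<alpha> :: "'k \<Rightarrow> nat"
  define rot where "rot \<alpha> = (\<Prod>i\<in>UNIV. (\<epsilon>$i) ^ \<alpha> i)" for \<alpha> :: "'k \<Rightarrow> nat"
  have "inj E" unfolding E_def using nonneg \<open>det A \<noteq> 0\<close> by (rule inj_transpose_mult_on_multi_indices)
  have norm_rot: "norm (rot \<alpha>) = 1" for \<alpha>
    by (simp add: rot_def prod_norm[symmetric] norm_power \<epsilon>)
  define d' where "d' \<beta> = (if \<beta> \<in> range E then c (inv E \<beta>) * rot (inv E \<beta>) else 0)" for \<beta>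
  have "((\<lambda>\<beta>. norm (d' \<beta>)) has_sum Aplus_norm c) UNIV"
    using Aplus_has_sum_norm[OF c]
    by (subst has_sum_reindex_inj_range[OF \<open>inj E\<close>]) (simp_all add: d'_def o_def inv_f_f[OF \<open>inj E\<close>] norm_mult norm_rot)
  then have d': "d' \<in> Aplus" and norm_d': "Aplus_norm d' = Aplus_norm c"
    using has_sum_norm_imp_Aplus by blast+
  have monom_\<phi>: "monom (\<phi> z) \<alpha> = rot \<alpha> * monom z (E \<alpha>)" if z: "z \<in> polydisc" for z \<alpha>
  proof -
    have "monom (\<phi> z) \<alpha> = (\<Prod>i\<in>UNIV. (\<epsilon>$i * (\<Prod>j\<in>UNIV. (z$j) ^ nat (A$i$j))) ^ \<alpha> i)"
      unfolding monom_def using \<phi> z by simp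
    also have "\<dots> = rot \<alpha> * (\<Prod>i\<in>UNIV. \<Prod>j\<in>UNIV. (z$j) ^ (\<alpha> i * nat (A$i$j)))"
      by (simp add: rot_def power_mult_distrib prod.distrib prod_power_distrib power_mult[symmetric] mult.commute)
    also have "(\<Prod>i\<in>UNIV. \<Prod>j\<in>UNIV. (z$j) ^ (\<alpha> i * nat (A$i$j))) = monom z (E \<alpha>)"
      by (subst prod.swap) (simp add: monom_def E_def power_sum)
    finally show ?thesis .
  qed
  have "Aplus_eval d' z = Aplus_eval c (\<phi> z)" if z: "z \<in> polydisc" for z
  proof -
    have "((\<lambda>\<beta>. d' \<beta> * monom z \<beta>) has_sum Aplus_eval c (\<phi> z)) UNIV"
      using Aplus_has_sum_eval[OF c maps_into[rule_format, OF z]]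
      by (subst has_sum_reindex_inj_range[OF \<open>inj E\<close>]) (simp_all add: d'_def o_def inv_f_f[OF \<open>inj E\<close>] monom_\<phi>[OF z] mult_ac)
    then show ?thesis unfolding Aplus_eval_def by (rule infsumI)
  qed
  then have "d = d'"
    using \<open>is_comp \<phi> c d\<close> by (intro Aplus_eval_inject[OF d d']) (simp add: is_comp_def)
  then show ?thesis using norm_d' by simp
qed

theorem theorem17:
  fixes \<phi> :: "complex^'k::finite \<Rightarrow> complex^'k"
  assumes analytic: "\<forall>i. holo_several (\<lambda>z. \<phi> z $ i) polydisc"
    and maps: "\<forall>z\<in>polydisc. \<phi> z \<in> cpolydisc"
    and bounded_Cphi: "\<forall>c\<in>Aplus. \<exists>d\<in>Aplus. is_comp \<phi> c d"
  shows "(\<forall>c\<in>Aplus. \<forall>d\<in>Aplus. is_comp \<phi> c d \<longrightarrow> Aplus_norm d = Aplus_norm c)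
     \<longleftrightarrow> (\<exists>(A::int^'k^'k) (\<epsilon>::complex^'k).
            (\<forall>i j. A$i$j \<ge> 0) \<and> det A \<noteq> 0 \<and> (\<forall>i. norm (\<epsilon>$i) = 1) \<and>
            (\<forall>z\<in>polydisc. \<forall>i. \<phi> z $ i = \<epsilon>$i * (\<Prod>j\<in>UNIV. (z$j) ^ nat (A$i$j))))"
    (is "?isometric \<longleftrightarrow> ?monomial")
proof
  assume ?isometric
  then interpret isometric_composition \<phi>
    using maps bounded_Cphi by unfold_locales
  show ?monomial by (rule monomial_form)
next
  assume ?monomial
  then show ?isometric using monomial_imp_isometric[OF maps] by blast
qed

end
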